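(* Let $0<\eta\le\gamma$ and let $c$ satisfy \[ 0\le c\le\frac{\sqrt{2|2\eta-\gamma|+\gamma^2+1}-|2\eta-\gamma|-1}{4\eta^2}. \] Then for all $x\in[-1,1]$ and $\epsilon\in[-1,1]$, \[ e^{c\eta^2x^2-\eta x}-\frac{e^{-\gamma(x+\epsilon)}-1}{\gamma}\,\eta\,(1+2c\eta\epsilon)\,e^{c\eta^2\epsilon^2+\eta\epsilon}\;\le\;e^{c\eta^2\epsilon^2+\eta\epsilon}. \] *)

theory Defs
  imports Complex_Main
begin

end

theory Submission
  imports Defs
begin

text \<open>
  Write \<open>u = x + \<epsilon>\<close> and \<open>k = \<eta> (1 + 2 c \<eta> \<epsilon>)\<close>. Dividing by \<open>exp (c \<eta>\<^sup>2 \<epsilon>\<^sup>2 + \<eta> \<epsilon>)\<close>, the claim becomes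
  \<open>G u \<le> 1 = G 0\<close> for \<open>G u = exp (c \<eta>\<^sup>2 u\<^sup>2 - k u) + k (1 - exp (-\<gamma> u)) / \<gamma>\<close> and \<open>u \<in> [\<epsilon>-1, \<epsilon>+1]\<close>.
  Now \<open>G' u = exp (-\<gamma> u) \<phi> u\<close> where \<open>\<phi>\<close> vanishes at 0 and \<open>\<phi>' = E Q\<close> with \<open>E > 0\<close> and a
  quadratic \<open>Q\<close>. The bound on \<open>c\<close> is exactly what makes \<open>Q \<le> 0\<close> on the interval, so \<open>\<phi>\<close>
  decreases through 0, \<open>G\<close> increases up to 0 and decreases afterwards.
\<close>

lemma DERIV_sign_change_imp_le_at_0:
  fixes f f' :: "real \<Rightarrow> real"
  assumes deriv: "\<And>y. (f has_real_derivative f' y) (at y)"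
    and nonneg: "\<And>y. a \<le> y \<Longrightarrow> y \<le> 0 \<Longrightarrow> 0 \<le> f' y"
    and nonpos: "\<And>y. 0 \<le> y \<Longrightarrow> y \<le> b \<Longrightarrow> f' y \<le> 0"
    and "a \<le> u" "u \<le> b"
  shows "f u \<le> f 0"
proof (cases "u \<le> 0")
  case True
  show ?thesis
    by (rule DERIV_nonneg_imp_nondecreasing[OF True])
       (use deriv nonneg \<open>a \<le> u\<close> in fastforce)
next
  case False
  then have "0 \<le> u" by simp
  show ?thesis
    by (rule DERIV_nonpos_imp_nonincreasing[OF \<open>0 \<le> u\<close>])
       (use deriv nonpos \<open>u \<le> b\<close> in fastforce)
qed

lemma exp_quadratic_plus_integral_le_1:
  fixes q k \<gamma> a b u :: real
  assumes "0 < \<gamma>" and "a \<le> 0" "0 \<le> b"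
    and Q_nonpos: "\<And>v. a \<le> v \<Longrightarrow> v \<le> b \<Longrightarrow> 2 * q + (2 * q * v - k) * (\<gamma> - k + 2 * q * v) \<le> 0"
    and "a \<le> u" "u \<le> b"
  shows "exp (q * u\<^sup>2 - k * u) + k * (1 - exp (- \<gamma> * u)) / \<gamma> \<le> 1"
proof -
  define E where "E v = exp ((\<gamma> - k) * v + q * v\<^sup>2)" for v
  define \<phi> where "\<phi> v = (2 * q * v - k) * E v + k" for v
  define G where "G v = exp (q * v\<^sup>2 - k * v) + k * (1 - exp (- \<gamma> * v)) / \<gamma>" for v
  have \<phi>_deriv: "(\<phi> has_real_derivative E v * (2 * q + (2 * q * v - k) * (\<gamma> - k + 2 * q * v))) (at v)"
    for v
    unfolding \<phi>_def[abs_def] E_def[abs_def]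
    by (auto intro!: derivative_eq_intros simp: algebra_simps)
  have \<phi>_antimono: "\<phi> y \<le> \<phi> x" if "a \<le> x" "x \<le> y" "y \<le> b" for x y
    by (rule DERIV_nonpos_imp_nonincreasing[OF \<open>x \<le> y\<close>])
       (use \<phi>_deriv Q_nonpos that in \<open>force simp: E_def intro: mult_nonneg_nonpos\<close>)
  have "\<phi> 0 = 0" by (simp add: \<phi>_def E_def)
  then have \<phi>_nonneg: "0 \<le> \<phi> v" if "a \<le> v" "v \<le> 0" for v
    using \<phi>_antimono that \<open>0 \<le> b\<close> by fastforce
  have \<phi>_nonpos: "\<phi> w \<le> 0" if "0 \<le> w" "w \<le> b" for w
    using \<phi>_antimono that \<open>a \<le> 0\<close> \<open>\<phi> 0 = 0\<close> by fastforce
  have G_deriv: "(G has_real_derivative exp (- \<gamma> * v) * \<phi> v) (at v)" for v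
  proof -
    have "exp (q * v\<^sup>2 - k * v) = exp (- \<gamma> * v) * E v"
      by (simp add: E_def exp_add[symmetric] algebra_simps)
    then show ?thesis
      unfolding G_def[abs_def] \<phi>_def using \<open>0 < \<gamma>\<close>
      by (auto intro!: derivative_eq_intros simp: algebra_simps)
  qed
  have "G u \<le> G 0"
    by (rule DERIV_sign_change_imp_le_at_0[OF G_deriv _ _ \<open>a \<le> u\<close> \<open>u \<le> b\<close>])
       (use \<phi>_nonneg \<phi>_nonpos in \<open>auto intro: mult_nonneg_nonpos\<close>)
  then show ?thesis by (simp add: G_def)
qed

lemma quadratic_nonpos_on_unit_interval:
  fixes t \<eta> \<gamma> s :: real
  assumes "0 \<le> t" and bound: "t\<^sup>2 + t * (\<bar>2 * \<eta> - \<gamma>\<bar> + 1) \<le> \<eta> * (\<gamma> - \<eta>)"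
    and "\<bar>s\<bar> \<le> 1"
  shows "t + (t * s - \<eta>) * (\<gamma> - \<eta> + t * s) \<le> 0"
proof -
  have "t\<^sup>2 * s\<^sup>2 \<le> t\<^sup>2"
    using \<open>\<bar>s\<bar> \<le> 1\<close> by (simp add: abs_square_le_1 mult_left_le)
  moreover have "t * (s * (\<gamma> - 2 * \<eta>)) \<le> t * \<bar>2 * \<eta> - \<gamma>\<bar>"
  proof (rule mult_left_mono[OF _ \<open>0 \<le> t\<close>])
    have "s * (\<gamma> - 2 * \<eta>) \<le> \<bar>s\<bar> * \<bar>\<gamma> - 2 * \<eta>\<bar>"
      by (metis abs_ge_self abs_mult)
    also have "\<dots> \<le> \<bar>2 * \<eta> - \<gamma>\<bar>"
      using \<open>\<bar>s\<bar> \<le> 1\<close> by (simp add: abs_minus_commute mult_left_le_one_le)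
    finally show "s * (\<gamma> - 2 * \<eta>) \<le> \<bar>2 * \<eta> - \<gamma>\<bar>" .
  qed
  moreover have "t + (t * s - \<eta>) * (\<gamma> - \<eta> + t * s)
      = t\<^sup>2 * s\<^sup>2 + t * (s * (\<gamma> - 2 * \<eta>)) + t - \<eta> * (\<gamma> - \<eta>)"
    by (simp add: power2_eq_square algebra_simps)
  ultimately show ?thesis using bound by (simp add: algebra_simps)
qed

lemma admissible_c_bound:
  fixes \<eta> \<gamma> c :: real
  assumes "0 < \<eta>" "0 \<le> c"
    and "c \<le> (sqrt (2 * \<bar>2 * \<eta> - \<gamma>\<bar> + \<gamma>^2 + 1) - \<bar>2 * \<eta> - \<gamma>\<bar> - 1) / (4 * \<eta>^2)"
  shows "(2 * c * \<eta>\<^sup>2)\<^sup>2 + 2 * c * \<eta>\<^sup>2 * (\<bar>2 * \<eta> - \<gamma>\<bar> + 1) \<le> \<eta> * (\<gamma> - \<eta>)"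
proof -
  define d where "d = \<bar>2 * \<eta> - \<gamma>\<bar>"
  define t where "t = 2 * c * \<eta>\<^sup>2"
  have "0 \<le> t" "0 \<le> d" using \<open>0 \<le> c\<close> by (simp_all add: t_def d_def)
  have "c * (4 * \<eta>\<^sup>2) \<le> sqrt (2 * d + \<gamma>\<^sup>2 + 1) - d - 1"
    using assms by (simp add: d_def pos_le_divide_eq)
  then have "2 * t + d + 1 \<le> sqrt (2 * d + \<gamma>\<^sup>2 + 1)"
    by (simp add: t_def algebra_simps)
  then have "(2 * t + d + 1)\<^sup>2 \<le> (sqrt (2 * d + \<gamma>\<^sup>2 + 1))\<^sup>2"
    using \<open>0 \<le> t\<close> \<open>0 \<le> d\<close> by (intro power_mono) auto
  then have "(2 * t + d + 1)\<^sup>2 \<le> 2 * d + \<gamma>\<^sup>2 + 1"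
    using \<open>0 \<le> d\<close> by simp
  moreover have "d\<^sup>2 = (2 * \<eta> - \<gamma>)\<^sup>2" by (simp add: d_def)
  ultimately show ?thesis
    unfolding t_def[symmetric] d_def[symmetric] by (simp add: power2_eq_square algebra_simps)
qed

theorem mainTheorem11:
  fixes \<eta> \<gamma> c x \<epsilon> :: real
  assumes "0 < \<eta>" and "\<eta> \<le> \<gamma>"
    and "0 \<le> c"
    and "c \<le> (sqrt (2 * \<bar>2 * \<eta> - \<gamma>\<bar> + \<gamma>^2 + 1) - \<bar>2 * \<eta> - \<gamma>\<bar> - 1) / (4 * \<eta>^2)"
    and "-1 \<le> x" and "x \<le> 1"
    and "-1 \<le> \<epsilon>" and "\<epsilon> \<le> 1"
  shows "exp (c * \<eta>^2 * x^2 - \<eta> * x)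
           - (exp (- \<gamma> * (x + \<epsilon>)) - 1) / \<gamma> * \<eta> * (1 + 2 * c * \<eta> * \<epsilon>)
               * exp (c * \<eta>^2 * \<epsilon>^2 + \<eta> * \<epsilon>)
         \<le> exp (c * \<eta>^2 * \<epsilon>^2 + \<eta> * \<epsilon>)"
proof -
  define t where "t = 2 * c * \<eta>\<^sup>2"
  define k where "k = \<eta> * (1 + 2 * c * \<eta> * \<epsilon>)"
  define F where "F = exp (c * \<eta>^2 * \<epsilon>^2 + \<eta> * \<epsilon>)"
  have "0 \<le> t" using \<open>0 \<le> c\<close> by (simp add: t_def)
  \<comment> \<open>Since \<open>k = \<eta> + t \<epsilon>\<close>, the quadratic \<open>Q\<close> only depends on \<open>v - \<epsilon> \<in> [-1, 1]\<close>.\<close>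
  have Q_nonpos: "2 * (c * \<eta>\<^sup>2) + (2 * (c * \<eta>\<^sup>2) * v - k) * (\<gamma> - k + 2 * (c * \<eta>\<^sup>2) * v) \<le> 0"
    if "\<epsilon> - 1 \<le> v" "v \<le> \<epsilon> + 1" for v
    using quadratic_nonpos_on_unit_interval[OF \<open>0 \<le> t\<close>, of \<eta> \<gamma> "v - \<epsilon>"]
      admissible_c_bound[OF \<open>0 < \<eta>\<close> \<open>0 \<le> c\<close> assms(4)] that
    by (simp add: t_def k_def power2_eq_square algebra_simps)
  have "exp (c * \<eta>\<^sup>2 * (x + \<epsilon>)\<^sup>2 - k * (x + \<epsilon>)) + k * (1 - exp (- \<gamma> * (x + \<epsilon>))) / \<gamma> \<le> 1"
    using exp_quadratic_plus_integral_le_1[of \<gamma> "\<epsilon> - 1" "\<epsilon> + 1" "c * \<eta>\<^sup>2" k "x + \<epsilon>"]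
      Q_nonpos assms by simp
  then have "(exp (c * \<eta>\<^sup>2 * (x + \<epsilon>)\<^sup>2 - k * (x + \<epsilon>)) + k * (1 - exp (- \<gamma> * (x + \<epsilon>))) / \<gamma>) * F \<le> F"
    by (simp add: F_def)
  moreover have "exp (c * \<eta>^2 * x^2 - \<eta> * x) = exp (c * \<eta>\<^sup>2 * (x + \<epsilon>)\<^sup>2 - k * (x + \<epsilon>)) * F"
    by (simp add: F_def k_def exp_add[symmetric] power2_eq_square algebra_simps)
  ultimately show ?thesis
    by (simp add: F_def k_def algebra_simps diff_divide_distrib add_divide_distrib)
qed

end
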